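(* Let $(a_i)_{i\in\mathbb{Z}}$ and $(b_i)_{i\in\mathbb{Z}}$ be jointly stationary processes, with $a_i$ taking values in the positive integers and $b_i$ in a finite or countable alphabet, such that: (i) $(a_i)$ is i.i.d.; (ii) each $a_i$ is independent of the joint collection $\{a_j: j<i\}\cup\{b_j:j<i\}$; (iii) each $b_i$ is almost surely determined by $a_i,b_{i-1},b_{i-2},\dots,b_{i-a_i}$. Then the pair process $((a_i,b_i))_{i\in\mathbb{Z}}$ is a uniform martingale.
   Context: A stationary process $(X_i)_{i\in\mathbb{Z}}$ on a finite or countable alphabet is a uniform martingale if the conditional distribution of $X_0$ given $X_{-1},\dots,X_{-n}$ converges as $n\to\infty$ to the conditional distribution of $X_0$ given the entire past $X_{-1},X_{-2},\dots$ in total variation, uniformly over all pasts. *)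

theory Defs
  imports "HOL-Probability.Probability"
begin

definition gen_by :: "'w measure \<Rightarrow> (int \<Rightarrow> 'w \<Rightarrow> 'x) \<Rightarrow> int set \<Rightarrow> 'w measure" where
  "gen_by M X J = sigma (space M) {X j -` A \<inter> space M | j A. j \<in> J}"

definition stationary :: "'w measure \<Rightarrow> (int \<Rightarrow> 'w \<Rightarrow> 'x) \<Rightarrow> bool" where
  "stationary M X \<longleftrightarrow>
     (\<forall>k::int. distr M (PiM UNIV (\<lambda>_. count_space UNIV)) (\<lambda>\<omega> i. X (i + k) \<omega>)
             = distr M (PiM UNIV (\<lambda>_. count_space UNIV)) (\<lambda>\<omega> i. X i \<omega>))"

definition cond_prob_finite_past :: "'w measure \<Rightarrow> (int \<Rightarrow> 'w \<Rightarrow> 'x) \<Rightarrow> nat \<Rightarrow> 'x \<Rightarrow> 'w \<Rightarrow> real" where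
  "cond_prob_finite_past M X n x =
     real_cond_exp M (gen_by M X {- int n .. -1}) (indicator {\<omega>. X 0 \<omega> = x})"

definition cond_prob_past :: "'w measure \<Rightarrow> (int \<Rightarrow> 'w \<Rightarrow> 'x) \<Rightarrow> 'x \<Rightarrow> 'w \<Rightarrow> real" where
  "cond_prob_past M X x =
     real_cond_exp M (gen_by M X {.. -1}) (indicator {\<omega>. X 0 \<omega> = x})"

text \<open>Uniform martingale: a stationary process such that the total variation distance
  between the conditional law of X_0 given the last n values and the conditional law
  given the entire past tends to 0, uniformly over (almost) all pasts, i.e. its essential
  supremum is bounded by a null sequence.\<close>
definition uniform_martingale :: "'w measure \<Rightarrow> (int \<Rightarrow> 'w \<Rightarrow> 'x) \<Rightarrow> bool" where
  "uniform_martingale M X \<longleftrightarrow> stationary M X \<and>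
     (\<exists>\<epsilon> :: nat \<Rightarrow> real. \<epsilon> \<longlonglongrightarrow> 0 \<and>
        (\<forall>n. AE \<omega> in M.
           ennreal (1/2) * (\<integral>\<^sup>+ x. ennreal \<bar>cond_prob_finite_past M X n x \<omega> - cond_prob_past M X x \<omega>\<bar> \<partial>count_space UNIV)
             \<le> ennreal (\<epsilon> n)))"

end

theory Submission
  imports Defs
begin

text \<open>
  Only time 0 matters. If a part J of the past contains the last k coordinates, then the
  independence of a_0 from the past and b_0 = f(a_0, b_{-1}, ..., b_{-a_0}) give
  P(X_0 = (k, y) | F_J) = P(a_0 = k) * [f(k, b_{-1}, ..., b_{-k}) = y].
  Hence the conditional laws of X_0 given the last n values and given the whole past coincide
  on the states with a_0 <= n, and each of them puts mass at most P(a_0 > n) on the remaining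
  states; so their total variation distance is at most P(a_0 > n), which tends to 0.
  Neither the i.i.d. property nor the positivity of the a_i is needed.
\<close>

lemma nn_integral_count_space_le_finite_sums:
  fixes f :: "'x::countable \<Rightarrow> ennreal"
  assumes "\<And>F. finite F \<Longrightarrow> sum f F \<le> q"
  shows "(\<integral>\<^sup>+x. f x \<partial>count_space UNIV) \<le> q"
proof -
  define h where "h m x = f x * indicator {x. to_nat x < m} x" for m x
  have fin: "finite {x::'x. to_nat x < m}" for m
    using finite_vimageI[OF finite_lessThan[of m] inj_to_nat] by (simp add: vimage_def)
  have "incseq h"
    unfolding incseq_def le_fun_def h_def by (auto intro!: mult_left_mono split: split_indicator)
  moreover have "(\<lambda>x. SUP m. h m x) = f"
  proof
    fix x
    show "(SUP m. h m x) = f x"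
    proof (rule antisym)
      show "(SUP m. h m x) \<le> f x"
        by (rule SUP_least) (auto simp: h_def split: split_indicator)
      show "f x \<le> (SUP m. h m x)"
        using SUP_upper[of "Suc (to_nat x)" UNIV "\<lambda>m. h m x"] by (simp add: h_def)
    qed
  qed
  ultimately have "(\<integral>\<^sup>+x. f x \<partial>count_space UNIV) = (SUP m. \<integral>\<^sup>+x. h m x \<partial>count_space UNIV)"
    by (metis borel_measurable_count_space nn_integral_monotone_convergence_SUP)
  also have "\<dots> \<le> q"
  proof (rule SUP_least)
    fix m
    have "(\<integral>\<^sup>+x. h m x \<partial>count_space UNIV) = (\<Sum>x\<in>{x. to_nat x < m}. f x)"
      by (subst nn_integral_count_space'[OF fin]) (auto simp: h_def intro!: sum.cong)
    then show "(\<integral>\<^sup>+x. h m x \<partial>count_space UNIV) \<le> q"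
      using assms[OF fin] by simp
  qed
  finally show ?thesis .
qed

lemma total_variation_le_of_tails:
  fixes u v :: "'x::countable \<Rightarrow> real"
  assumes nonneg: "\<And>x. u x \<ge> 0" "\<And>x. v x \<ge> 0"
    and agree: "\<And>x. \<not> P x \<Longrightarrow> u x = v x"
    and u_tail: "\<And>F. finite F \<Longrightarrow> F \<subseteq> {x. P x} \<Longrightarrow> sum u F \<le> q"
    and v_tail: "\<And>F. finite F \<Longrightarrow> F \<subseteq> {x. P x} \<Longrightarrow> sum v F \<le> q"
  shows "ennreal (1/2) * (\<integral>\<^sup>+x. ennreal \<bar>u x - v x\<bar> \<partial>count_space UNIV) \<le> ennreal q"
proof -
  have q0: "q \<ge> 0"
    using u_tail[of "{}"] by simp
  have tail_integral_le: "(\<integral>\<^sup>+x. ennreal (if P x then w x else 0) \<partial>count_space UNIV) \<le> ennreal q"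
    if "\<And>x. w x \<ge> 0" "\<And>F. finite F \<Longrightarrow> F \<subseteq> {x. P x} \<Longrightarrow> sum w F \<le> q"
    for w :: "'x \<Rightarrow> real"
  proof (rule nn_integral_count_space_le_finite_sums)
    fix F :: "'x set" assume "finite F"
    then have "(\<Sum>x\<in>F. ennreal (if P x then w x else 0)) = ennreal (sum w {x\<in>F. P x})"
      using that(1) by (simp add: sum.inter_filter)
    also have "\<dots> \<le> ennreal q"
      using that(2)[of "{x\<in>F. P x}"] \<open>finite F\<close> by (auto intro: ennreal_leI)
    finally show "(\<Sum>x\<in>F. ennreal (if P x then w x else 0)) \<le> ennreal q" .
  qed
  have "(\<integral>\<^sup>+x. ennreal \<bar>u x - v x\<bar> \<partial>count_space UNIV)
      \<le> (\<integral>\<^sup>+x. ennreal (if P x then u x else 0) + ennreal (if P x then v x else 0) \<partial>count_space UNIV)"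
    using nonneg agree by (intro nn_integral_mono) (auto simp: ennreal_plus[symmetric] abs_if simp del: ennreal_plus)
  also have "\<dots> = (\<integral>\<^sup>+x. ennreal (if P x then u x else 0) \<partial>count_space UNIV)
      + (\<integral>\<^sup>+x. ennreal (if P x then v x else 0) \<partial>count_space UNIV)"
    by (rule nn_integral_add) auto
  also have "\<dots> \<le> ennreal q + ennreal q"
    using tail_integral_le[OF nonneg(1) u_tail] tail_integral_le[OF nonneg(2) v_tail] by (rule add_mono)
  finally have "ennreal (1/2) * (\<integral>\<^sup>+x. ennreal \<bar>u x - v x\<bar> \<partial>count_space UNIV)
      \<le> ennreal (1/2) * (ennreal q + ennreal q)"
    by (rule mult_left_mono) simp
  also have "\<dots> = ennreal (1/2) * ennreal (2 * q)"
    using q0 by (simp add: ennreal_plus[symmetric] del: ennreal_plus)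
  also have "\<dots> = ennreal q"
    by (subst ennreal_mult[symmetric]) (use q0 in auto)
  finally show ?thesis .
qed

lemma measurable_Pair_count_space:
  fixes f :: "'a \<Rightarrow> 'x::countable" and g :: "'a \<Rightarrow> 'y::countable"
  assumes "f \<in> measurable M (count_space UNIV)" "g \<in> measurable M (count_space UNIV)"
  shows "(\<lambda>\<omega>. (f \<omega>, g \<omega>)) \<in> measurable M (count_space UNIV)"
  using measurable_Pair[OF assms] by (simp add: pair_measure_countable)

lemma measurable_map_count_space:
  fixes g :: "'i \<Rightarrow> 'a \<Rightarrow> 'x::countable"
  assumes "\<And>j. j \<in> set js \<Longrightarrow> g j \<in> measurable M (count_space UNIV)"
  shows "(\<lambda>\<omega>. map (\<lambda>j. g j \<omega>) js) \<in> measurable M (count_space UNIV)"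
  using assms
proof (induction js)
  case (Cons j js)
  have "(\<lambda>\<omega>. (g j \<omega>, map (\<lambda>j. g j \<omega>) js)) \<in> measurable M (count_space UNIV)"
    using Cons by (intro measurable_Pair_count_space) auto
  then have "(\<lambda>\<omega>. case_prod (#) (g j \<omega>, map (\<lambda>j. g j \<omega>) js)) \<in> measurable M (count_space UNIV)"
    by (rule measurable_compose) simp
  then show ?case by simp
qed simp

lemma gen_by_generator_subset: "{X j -` A \<inter> space M | j A. j \<in> J} \<subseteq> Pow (space M)"
  by auto

lemma space_gen_by [simp]: "space (gen_by M X J) = space M"
  unfolding gen_by_def using gen_by_generator_subset by (simp add: space_measure_of_conv)

lemma sets_gen_by: "sets (gen_by M X J) = sigma_sets (space M) {X j -` A \<inter> space M | j A. j \<in> J}"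
  unfolding gen_by_def by (rule sets_measure_of[OF gen_by_generator_subset])

lemma vimage_in_sets_gen_by: "j \<in> J \<Longrightarrow> X j -` A \<inter> space M \<in> sets (gen_by M X J)"
  unfolding sets_gen_by by (rule sigma_sets.Basic) blast

lemma measurable_gen_by: "j \<in> J \<Longrightarrow> X j \<in> measurable (gen_by M X J) (count_space UNIV)"
  by (auto simp: measurable_def vimage_in_sets_gen_by)

lemma subalgebra_gen_by:
  assumes "\<And>j. j \<in> J \<Longrightarrow> X j \<in> measurable M (count_space UNIV)"
  shows "subalgebra M (gen_by M X J)"
proof -
  have "{X j -` A \<inter> space M | j A. j \<in> J} \<subseteq> sets M"
    using assms measurable_sets by fastforce
  then show ?thesis
    unfolding subalgebra_def sets_gen_by by (simp add: sets.sigma_sets_subset)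
qed

lemma sets_gen_by_mono: "J \<subseteq> J' \<Longrightarrow> sets (gen_by M X J) \<subseteq> sets (gen_by M X J')"
  unfolding sets_gen_by by (rule sigma_sets_mono) blast

context prob_space
begin

lemma real_cond_exp_indicator_indep:
  assumes sub: "subalgebra M H"
    and indep: "indep_set EE PP" and H_PP: "sets H \<subseteq> PP"
    and E: "E \<in> EE" and S: "S \<in> sets H"
  shows "AE \<omega> in M. real_cond_exp M H (indicator (E \<inter> S)) \<omega> = prob E * indicator S \<omega>"
proof -
  interpret finite_measure_subalgebra M H
    using sub by unfold_locales
  have prob_Int: "prob (E \<inter> B) = prob E * prob B" if "B \<in> PP" for B
    using indep E that unfolding indep_sets2_eq by auto
  have E_ev: "E \<in> events"
    using indep E unfolding indep_sets2_eq by auto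
  have [measurable]: "S \<in> sets H" "S \<in> events"
    using S subalg by (auto simp: subalgebra_def)
  show ?thesis
  proof (rule real_cond_exp_charact)
    fix A assume A: "A \<in> sets H"
    then have "A \<in> events"
      using subalg by (auto simp: subalgebra_def)
    have "(\<integral>\<omega>\<in>A. indicator (E \<inter> S) \<omega> \<partial>M) = prob (E \<inter> (A \<inter> S))"
      using \<open>A \<in> events\<close> E_ev
      by (simp add: set_lebesgue_integral_def indicator_inter_arith[symmetric] Int_ac)
    also have "\<dots> = prob E * prob (A \<inter> S)"
      using A S H_PP by (intro prob_Int) auto
    also have "\<dots> = (\<integral>\<omega>\<in>A. prob E * indicator S \<omega> \<partial>M)"
      using \<open>A \<in> events\<close>
      by (simp add: set_lebesgue_integral_def indicator_inter_arith[symmetric] Int_ac)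
    finally show "(\<integral>\<omega>\<in>A. indicator (E \<inter> S) \<omega> \<partial>M) = (\<integral>\<omega>\<in>A. prob E * indicator S \<omega> \<partial>M)" .
  qed (use E_ev in \<open>auto simp: less_top[symmetric]\<close>)
qed

lemma real_cond_exp_sum_indicator_le:
  fixes Y :: "'a \<Rightarrow> 'x::countable" and B :: "'x set"
  assumes sub: "subalgebra M H" and [measurable]: "Y \<in> measurable M (count_space UNIV)"
  shows "AE \<omega> in M. \<forall>T. finite T \<longrightarrow> T \<subseteq> B \<longrightarrow>
    (\<Sum>x\<in>T. real_cond_exp M H (indicator {\<omega>. Y \<omega> = x}) \<omega>) \<le> real_cond_exp M H (indicator {\<omega>. Y \<omega> \<in> B}) \<omega>"
proof -
  interpret finite_measure_subalgebra M H
    using sub by unfold_locales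
  have integrable_ind: "integrable M (indicator {\<omega>. Y \<omega> \<in> C} :: 'a \<Rightarrow> real)" for C
    by (rule integrable_const_bound[where B=1]) (auto split: split_indicator)
  have "AE \<omega> in M. \<forall>T\<in>{T. finite T}. T \<subseteq> B \<longrightarrow>
    (\<Sum>x\<in>T. real_cond_exp M H (indicator {\<omega>. Y \<omega> = x}) \<omega>) \<le> real_cond_exp M H (indicator {\<omega>. Y \<omega> \<in> B}) \<omega>"
  proof (rule AE_ball_countable'[OF _ countable_Collect_finite])
    fix T :: "'x set" assume "T \<in> {T. finite T}"
    then have "finite T" by simp
    have "AE \<omega> in M. (\<Sum>x\<in>T. real_cond_exp M H (indicator {\<omega>. Y \<omega> = x}) \<omega>)
        = real_cond_exp M H (\<lambda>\<omega>. \<Sum>x\<in>T. indicator {\<omega>. Y \<omega> = x} \<omega>) \<omega>"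
      using integrable_ind[of "{_}"] by (auto intro: AE_symmetric)
    moreover have "AE \<omega> in M. T \<subseteq> B \<longrightarrow> real_cond_exp M H (\<lambda>\<omega>. \<Sum>x\<in>T. indicator {\<omega>. Y \<omega> = x} \<omega>) \<omega>
        \<le> real_cond_exp M H (indicator {\<omega>. Y \<omega> \<in> B}) \<omega>"
    proof (cases "T \<subseteq> B")
      case True
      have "(\<Sum>x\<in>T. indicator {\<omega>. Y \<omega> = x} \<omega>) \<le> (indicator {\<omega>. Y \<omega> \<in> B} \<omega> :: real)" for \<omega>
      proof -
        have "(\<Sum>x\<in>T. indicator {\<omega>. Y \<omega> = x} \<omega>) = (indicator {\<omega>. Y \<omega> \<in> T} \<omega> :: real)"
          using \<open>finite T\<close> by (simp add: indicator_def of_bool_def)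
        then show ?thesis
          using True by (auto split: split_indicator)
      qed
      then show ?thesis
        using integrable_ind[of "{_}"] integrable_ind[of B]
        by (auto intro!: real_cond_exp_mono)
    qed simp
    ultimately show "AE \<omega> in M. T \<subseteq> B \<longrightarrow> (\<Sum>x\<in>T. real_cond_exp M H (indicator {\<omega>. Y \<omega> = x}) \<omega>)
        \<le> real_cond_exp M H (indicator {\<omega>. Y \<omega> \<in> B}) \<omega>"
      by eventually_elim simp
  qed
  then show ?thesis by simp
qed

end

definition past_window :: "(int \<Rightarrow> 'w \<Rightarrow> 'b) \<Rightarrow> nat \<Rightarrow> 'w \<Rightarrow> 'b list" where
  "past_window b k \<omega> = map (\<lambda>j. b (- int j) \<omega>) [1..<Suc k]"

locale window_determined = prob_space M
  for M :: "'w measure" and a :: "int \<Rightarrow> 'w \<Rightarrow> nat" and b :: "int \<Rightarrow> 'w \<Rightarrow> 'b::countable"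
    and f :: "nat \<Rightarrow> 'b list \<Rightarrow> 'b" +
  assumes a_meas [measurable]: "\<And>i. a i \<in> measurable M (count_space UNIV)"
    and b_meas [measurable]: "\<And>i. b i \<in> measurable M (count_space UNIV)"
    and indep_present_past:
      "indep_set (sets (gen_by M a {0})) (sets (gen_by M (\<lambda>j \<omega>. (a j \<omega>, b j \<omega>)) {..<0}))"
    and present_determined: "AE \<omega> in M. b 0 \<omega> = f (a 0 \<omega>) (past_window b (a 0 \<omega>) \<omega>)"
begin

abbreviation joint :: "int \<Rightarrow> 'w \<Rightarrow> nat \<times> 'b" where
  "joint \<equiv> \<lambda>i \<omega>. (a i \<omega>, b i \<omega>)"

lemma joint_meas [measurable]: "joint i \<in> measurable M (count_space UNIV)"
  by (intro measurable_Pair_count_space a_meas b_meas)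

lemma a_0_event_in_present: "{\<omega> \<in> space M. a 0 \<omega> \<in> B} \<in> sets (gen_by M a {0})"
  using vimage_in_sets_gen_by[of 0 "{0}" a B M] by (simp add: vimage_def Int_def conj_commute)

lemma cond_prob_joint_0_eq:
  assumes J_past: "J \<subseteq> {..<0}" and window_in_J: "{- int k..-1} \<subseteq> J"
  shows "AE \<omega> in M. real_cond_exp M (gen_by M joint J) (indicator {\<omega>. joint 0 \<omega> = (k, y)}) \<omega>
    = prob {\<omega> \<in> space M. a 0 \<omega> = k} * indicator {\<omega> \<in> space M. f k (past_window b k \<omega>) = y} \<omega>"
proof -
  define H where "H = gen_by M joint J"
  define E where "E = {\<omega> \<in> space M. a 0 \<omega> = k}"
  define S where "S = {\<omega> \<in> space M. f k (past_window b k \<omega>) = y}"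
  have sub: "subalgebra M H"
    unfolding H_def by (rule subalgebra_gen_by) simp
  interpret finite_measure_subalgebra M H
    using sub by unfold_locales
  have "b (- int j) \<in> measurable H (count_space UNIV)" if "j \<in> set [1..<Suc k]" for j
  proof -
    have "joint (- int j) \<in> measurable H (count_space UNIV)"
      unfolding H_def using that window_in_J by (intro measurable_gen_by) auto
    then show ?thesis
      using measurable_compose[of "joint (- int j)" H "count_space UNIV" snd "count_space UNIV"]
      by (simp add: comp_def)
  qed
  then have "past_window b k \<in> measurable H (count_space UNIV)"
    unfolding past_window_def[abs_def] by (rule measurable_map_count_space)
  then have S_H: "S \<in> sets H"
    unfolding S_def using measurable_sets[of "\<lambda>\<omega>. f k (past_window b k \<omega>)" H "count_space UNIV" "{y}"]
    by (simp add: H_def vimage_def Int_def conj_commute)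
  have "AE \<omega> in M. real_cond_exp M H (indicator {\<omega>. joint 0 \<omega> = (k, y)}) \<omega>
      = real_cond_exp M H (indicator (E \<inter> S)) \<omega>"
  proof (rule real_cond_exp_cong)
    show "AE \<omega> in M. indicator {\<omega>. joint 0 \<omega> = (k, y)} \<omega> = (indicator (E \<inter> S) \<omega> :: real)"
      using present_determined AE_space by eventually_elim (auto simp: E_def S_def split: split_indicator)
    have "E \<in> events" "S \<in> events"
      using S_H subalg by (auto simp: E_def subalgebra_def)
    then show "(indicator (E \<inter> S) :: 'w \<Rightarrow> real) \<in> borel_measurable M"
      by measurable
  qed simp
  moreover have "AE \<omega> in M. real_cond_exp M H (indicator (E \<inter> S)) \<omega> = prob E * indicator S \<omega>"
  proof (rule real_cond_exp_indicator_indep[OF sub indep_present_past _ _ S_H])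
    show "sets H \<subseteq> sets (gen_by M joint {..<0})"
      unfolding H_def using J_past by (rule sets_gen_by_mono)
    show "E \<in> sets (gen_by M a {0})"
      unfolding E_def using a_0_event_in_present[of "{k}"] by simp
  qed
  ultimately show ?thesis
    unfolding H_def E_def S_def by eventually_elim simp
qed

lemma cond_prob_joint_0_tail_le:
  assumes J_past: "J \<subseteq> {..<0}"
  shows "AE \<omega> in M. \<forall>T. finite T \<longrightarrow> T \<subseteq> {x. n < fst x} \<longrightarrow>
    (\<Sum>x\<in>T. real_cond_exp M (gen_by M joint J) (indicator {\<omega>. joint 0 \<omega> = x}) \<omega>)
      \<le> prob {\<omega> \<in> space M. n < a 0 \<omega>}"
proof -
  define H where "H = gen_by M joint J"
  define E where "E = {\<omega> \<in> space M. n < a 0 \<omega>}"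
  have sub: "subalgebra M H"
    unfolding H_def by (rule subalgebra_gen_by) simp
  interpret finite_measure_subalgebra M H
    using sub by unfold_locales
  have "AE \<omega> in M. real_cond_exp M H (indicator {\<omega>. joint 0 \<omega> \<in> {x. n < fst x}}) \<omega>
      = real_cond_exp M H (indicator (E \<inter> space M)) \<omega>"
    by (rule real_cond_exp_cong) (auto simp: E_def split: split_indicator)
  moreover have "AE \<omega> in M. real_cond_exp M H (indicator (E \<inter> space M)) \<omega> = prob E * indicator (space M) \<omega>"
  proof (rule real_cond_exp_indicator_indep[OF sub indep_present_past])
    show "sets H \<subseteq> sets (gen_by M joint {..<0})"
      unfolding H_def using J_past by (rule sets_gen_by_mono)
    show "E \<in> sets (gen_by M a {0})"
      unfolding E_def using a_0_event_in_present[of "{n<..}"] by simp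
    show "space M \<in> sets H"
      using sets.top[of H] by (simp add: H_def)
  qed
  moreover note real_cond_exp_sum_indicator_le[OF sub joint_meas[of 0], of "{x. n < fst x}"]
  ultimately show ?thesis
    using AE_space unfolding H_def E_def by eventually_elim simp
qed

lemma cond_prob_joint_0_nonneg:
  "AE \<omega> in M. \<forall>x. real_cond_exp M (gen_by M joint J) (indicator {\<omega>. joint 0 \<omega> = x}) \<omega> \<ge> 0"
proof -
  interpret finite_measure_subalgebra M "gen_by M joint J"
    by unfold_locales (rule subalgebra_gen_by, simp)
  show ?thesis
    unfolding AE_all_countable by (intro allI real_cond_exp_pos) auto
qed

lemma total_variation_cond_prob_le:
  "AE \<omega> in M. ennreal (1/2) * (\<integral>\<^sup>+x. ennreal \<bar>cond_prob_finite_past M joint n x \<omega> - cond_prob_past M joint x \<omega>\<bar>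
      \<partial>count_space UNIV) \<le> ennreal (prob {\<omega> \<in> space M. n < a 0 \<omega>})"
proof -
  have finite_past: "{- int n..-1} \<subseteq> {..<0::int}" and past: "{..-1} \<subseteq> {..<0::int}"
    by auto
  have "AE \<omega> in M. \<forall>x. \<not> n < fst x \<longrightarrow> cond_prob_finite_past M joint n x \<omega> = cond_prob_past M joint x \<omega>"
    unfolding AE_all_countable
  proof
    fix x :: "nat \<times> 'b"
    obtain k y where x: "x = (k, y)"
      by (cases x)
    show "AE \<omega> in M. \<not> n < fst x \<longrightarrow> cond_prob_finite_past M joint n x \<omega> = cond_prob_past M joint x \<omega>"
    proof (cases "k \<le> n")
      case True
      then have "{- int k..-1} \<subseteq> {- int n..-1}" "{- int k..-1} \<subseteq> {..-1}"
        by auto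
      from cond_prob_joint_0_eq[OF finite_past this(1), of y] cond_prob_joint_0_eq[OF past this(2), of y]
      have "AE \<omega> in M. real_cond_exp M (gen_by M joint {- int n..-1}) (indicator {\<omega>. joint 0 \<omega> = (k, y)}) \<omega>
          = real_cond_exp M (gen_by M joint {..-1}) (indicator {\<omega>. joint 0 \<omega> = (k, y)}) \<omega>"
        by eventually_elim simp
      then show ?thesis
        unfolding cond_prob_finite_past_def cond_prob_past_def x by eventually_elim simp
    qed (simp add: x)
  qed
  moreover note cond_prob_joint_0_nonneg[of "{- int n..-1}"] cond_prob_joint_0_nonneg[of "{..-1}"]
    cond_prob_joint_0_tail_le[OF finite_past, of n] cond_prob_joint_0_tail_le[OF past, of n]
  ultimately show ?thesis
    unfolding cond_prob_finite_past_def cond_prob_past_def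
    by eventually_elim (rule total_variation_le_of_tails[where P="\<lambda>x. n < fst x"], auto)
qed

lemma uniform_martingale_joint:
  assumes "stationary M joint"
  shows "uniform_martingale M joint"
proof -
  have "(\<lambda>n. prob {\<omega> \<in> space M. n < a 0 \<omega>}) \<longlonglongrightarrow> prob (\<Inter>n. {\<omega> \<in> space M. n < a 0 \<omega>})"
    by (rule finite_Lim_measure_decseq) (auto simp: decseq_def)
  moreover have "(\<Inter>n. {\<omega> \<in> space M. n < a 0 \<omega>}) = {}"
    by auto
  ultimately show ?thesis
    unfolding uniform_martingale_def using assms total_variation_cond_prob_le by auto
qed

end

theorem mainTheorem10:
  fixes M :: "'w measure"
    and a :: "int \<Rightarrow> 'w \<Rightarrow> nat"
    and b :: "int \<Rightarrow> 'w \<Rightarrow> 'b::countable"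
  assumes "prob_space M"
    and a_meas: "\<And>i. a i \<in> measurable M (count_space UNIV)"
    and b_meas: "\<And>i. b i \<in> measurable M (count_space UNIV)"
    and a_pos: "\<And>i \<omega>. \<omega> \<in> space M \<Longrightarrow> a i \<omega> > 0"
    and joint_stationary: "stationary M (\<lambda>i \<omega>. (a i \<omega>, b i \<omega>))"
    and a_indep: "prob_space.indep_vars M (\<lambda>_. count_space UNIV) a UNIV"
    and a_ident: "\<And>i. distr M (count_space UNIV) (a i) = distr M (count_space UNIV) (a 0)"
    and a_indep_past: "\<And>i. prob_space.indep_set M
          (sets (gen_by M a {i}))
          (sets (gen_by M (\<lambda>j \<omega>. (a j \<omega>, b j \<omega>)) {..<i}))"
    and b_determined: "\<And>i. \<exists>f :: nat \<Rightarrow> 'b list \<Rightarrow> 'b.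
          AE \<omega> in M. b i \<omega> = f (a i \<omega>) (map (\<lambda>k. b (i - int k) \<omega>) [1..<Suc (a i \<omega>)])"
  shows "uniform_martingale M (\<lambda>i \<omega>. (a i \<omega>, b i \<omega>))"
proof -
  interpret prob_space M by fact
  obtain f where "AE \<omega> in M. b 0 \<omega> = f (a 0 \<omega>) (map (\<lambda>k. b (0 - int k) \<omega>) [1..<Suc (a 0 \<omega>)])"
    using b_determined[of 0] by blast
  then interpret window_determined M a b f
    using a_meas b_meas a_indep_past[of 0] by unfold_locales (simp_all add: past_window_def)
  show ?thesis
    using joint_stationary by (rule uniform_martingale_joint)
qed

end
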